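(* For each $t\in J$, the map $\Psi_t\colon A\to\hat D_t\setminus\hat I_t$ is a bijection.
   Context: Setup: $I=[-1,1]$, $J=(1,2]$, $f_t(x)=\min(t(x-1)+3,\,t(1-x)-1)$. $S$ is the circle of radius 2 with angular coordinate $y$; $D$ is the disk of radius 2 with coordinates $(y,s)\in S\times[0,1]$ (from a smooth embedding of the mapping cylinder of $y\mapsto\cos y$), $(y,0)=y\in S$, $(y,1)=\cos y\in I\subset D$. $\Upsilon(y,s)=(y,2s)$ for $s\le1/2$, $(y,1)$ for $s\ge1/2$. An unwrapping is a continuous family of orientation-preserving near-homeomorphisms $\bar f_t\colon D\to D$ with $\bar f_t$ injective on $I$, $\bar f_t(I)\subset\{s\ge1/2\}$, $\Upsilon\circ\bar f_t|_I=f_t$, the second coordinate of $\bar f_t(y,s)$ equal to $s$ for $s\le 1/2$; assume moreover $\bar f_t=\mathrm{id}$ on $S\times[0,3/4]$. $H_t=\Upsilon\circ\bar f_t$ (so $H_t|_I=f_t$), $\hat D_t=\varprojlim(D,H_t)=\{\langle z_0,z_1,\dots\rangle: H_t(z_{n+1})=z_n\}$, $\hat I_t=\varprojlim(I,f_t)\subset\hat D_t$. Let $A=S\times[0,\infty)$. Define $\Psi_t\colon A\to\hat D_t\setminus\hat I_t$ by: if $s\in[0,1)$, $\Psi_t(y,s)=\langle(y,s),(y,s/2),(y,s/4),\dots\rangle$; if $s\ge1$, let $k=\lfloor s\rfloor$, $u=s-k$, $v=(u+1)/2\in[1/2,1)$, and $\Psi_t(y,s)=\langle z_0,z_1,\dots\rangle$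 with $z_{k-j}=H_t^{\,j}(y,v)$ for $j=1,\dots,k$ (equivalently $f_t^{j-1}(H_t(y,v))$), $z_k=(y,v)$, and $z_{k+j}=(y,v/2^j)$ for $j\ge1$. *)

theory Defs
  imports "HOL-Analysis.Analysis" "HOL-Complex_Analysis.Complex_Analysis"
begin

definition Jset :: "real set" where "Jset = {1<..2}"

definition fmap :: "real \<Rightarrow> real \<Rightarrow> real" where
  "fmap t x = min (t * (x - 1) + 3) (t * (1 - x) - 1)"

definition Sset :: "complex set" where "Sset = sphere 0 2"
definition Dset :: "complex set" where "Dset = cball 0 2"

text \<open>Concrete embedding of the mapping cylinder of y \<mapsto> cos y into D:
  for w = 2 e^{iy} in S and s in [0,1], the point (y,s) of D is
  ((2-s) cos y, 2(1-s) sin y).  Thus (y,0) = y in S and (y,1) = cos y in I.\<close>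
definition coordD :: "complex \<Rightarrow> real \<Rightarrow> complex" where
  "coordD w s = Complex (Re w * (2 - s) / 2) (Im w * (1 - s))"

definition Iset :: "complex set" where "Iset = of_real ` {-1..1}"

definition Upsilon :: "complex \<Rightarrow> complex" where
  "Upsilon z = (let (w, s) = (SOME (w, s). w \<in> Sset \<and> s \<in> {0..1} \<and> z = coordD w s)
                in coordD w (min (2 * s) 1))"

definition orient_pres_homeo :: "(complex \<Rightarrow> complex) \<Rightarrow> bool" where
  "orient_pres_homeo h \<longleftrightarrow>
     (\<exists>h'. homeomorphism Dset Dset h h') \<and>
     winding_number (h \<circ> circlepath 0 2) (h 0) = 1"

definition op_near_homeo :: "(complex \<Rightarrow> complex) \<Rightarrow> bool" where
  "op_near_homeo g \<longleftrightarrow> g ` Dset \<subseteq> Dset \<and>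
     (\<forall>e>0. \<exists>h. orient_pres_homeo h \<and> (\<forall>z\<in>Dset. dist (g z) (h z) < e))"

text \<open>Unwrapping of the family f_t (with the extra assumption fbar_t = id on
  S \<times> [0,3/4]).\<close>
definition unwrapping :: "(real \<Rightarrow> complex \<Rightarrow> complex) \<Rightarrow> bool" where
  "unwrapping fbar \<longleftrightarrow>
     continuous_on (Jset \<times> Dset) (\<lambda>(t, z). fbar t z) \<and>
     (\<forall>t\<in>Jset.
        op_near_homeo (fbar t) \<and>
        inj_on (fbar t) Iset \<and>
        (\<forall>x\<in>Iset. \<exists>w\<in>Sset. \<exists>s\<in>{1/2..1}. fbar t x = coordD w s) \<and>
        (\<forall>x\<in>{-1..1}. Upsilon (fbar t (of_real x)) = of_real (fmap t x)) \<and>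
        (\<forall>w\<in>Sset. \<forall>s\<in>{0..1/2}. \<exists>w'\<in>Sset. fbar t (coordD w s) = coordD w' s) \<and>
        (\<forall>w\<in>Sset. \<forall>s\<in>{0..3/4}. fbar t (coordD w s) = coordD w s))"

definition Hmap :: "(real \<Rightarrow> complex \<Rightarrow> complex) \<Rightarrow> real \<Rightarrow> complex \<Rightarrow> complex" where
  "Hmap fbar t = Upsilon \<circ> fbar t"

definition Dhat :: "(real \<Rightarrow> complex \<Rightarrow> complex) \<Rightarrow> real \<Rightarrow> (nat \<Rightarrow> complex) set" where
  "Dhat fbar t = {z. \<forall>n. z n \<in> Dset \<and> Hmap fbar t (z (Suc n)) = z n}"

definition Ihat :: "real \<Rightarrow> (nat \<Rightarrow> complex) set" where
  "Ihat t = {z. \<forall>n. z n \<in> Iset \<and> of_real (fmap t (Re (z (Suc n)))) = z n}"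

definition Aset :: "(complex \<times> real) set" where "Aset = Sset \<times> {0..}"

definition Psi :: "(real \<Rightarrow> complex \<Rightarrow> complex) \<Rightarrow> real \<Rightarrow> complex \<times> real \<Rightarrow> nat \<Rightarrow> complex" where
  "Psi fbar t p = (case p of (w, s) \<Rightarrow>
     if s < 1 then (\<lambda>n. coordD w (s / 2 ^ n))
     else (let k = nat \<lfloor>s\<rfloor>; u = s - real k; v = (u + 1) / 2 in
           (\<lambda>n. if n < k then (Hmap fbar t ^^ (k - n)) (coordD w v)
                else coordD w (v / 2 ^ (n - k)))))"

end

theory Submission
  imports Defs
begin

text \<open>Points of \<open>D\<close> off \<open>I\<close> have cylinder coordinates \<open>(y, s)\<close> with \<open>s < 1\<close>. On the collar
  \<open>s \<le> 3/4\<close> the map \<open>H\<^sub>t\<close> doubles \<open>s\<close>, and every point with \<open>s \<ge> 1/2\<close> is sent into \<open>I\<close>: for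
  \<open>s \<le> 3/4\<close> by \<open>\<Upsilon>\<close>, and for \<open>s > 3/4\<close> because the near-homeomorphism \<open>f\<^sub>t\<close>, being the identity on
  the collar, cannot fold such points into \<open>s < 3/4\<close>. Since \<open>H\<^sub>t\<close> maps \<open>I\<close> into itself, a thread
  in \<open>Dhat fbar t - Ihat t\<close> lies in \<open>I\<close> up to some level \<open>k\<close> and equals \<open>(y, v / 2\<^sup>j)\<close> at level \<open>k + j\<close>,
  with \<open>v \<ge> 1/2\<close> when \<open>k > 0\<close>; the pair \<open>(k, v)\<close> is exactly how \<open>\<Psi>\<^sub>t\<close> encodes \<open>s\<close>.\<close>

lemma Sset_Re_Im: "w \<in> Sset \<Longrightarrow> (Re w)\<^sup>2 + (Im w)\<^sup>2 = 4"
  by (simp add: Sset_def flip: cmod_power2)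

lemma Re_coordD [simp]: "Re (coordD w s) = Re w * (2 - s) / 2"
  and Im_coordD [simp]: "Im (coordD w s) = Im w * (1 - s)"
  by (simp_all add: coordD_def)

lemma coordD_in_Dset: assumes "w \<in> Sset" "s \<in> {0..1}" shows "coordD w s \<in> Dset"
proof -
  have "((2-s)/2)\<^sup>2 \<le> 1" "(1-s)\<^sup>2 \<le> 1" using assms by (intro power_le_one; simp)+
  then have "(Re w)\<^sup>2 * ((2-s)/2)\<^sup>2 + (Im w)\<^sup>2 * (1-s)\<^sup>2 \<le> (Re w)\<^sup>2 + (Im w)\<^sup>2"
    by (intro add_mono mult_left_le) auto
  moreover have "(cmod (coordD w s))\<^sup>2 = (Re w)\<^sup>2 * ((2-s)/2)\<^sup>2 + (Im w)\<^sup>2 * (1-s)\<^sup>2"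
    unfolding cmod_power2 Re_coordD Im_coordD power_mult_distrib power_divide by simp
  ultimately have "(cmod (coordD w s))\<^sup>2 \<le> 2\<^sup>2" using Sset_Re_Im[OF assms(1)] by simp
  then have "cmod (coordD w s) \<le> 2" by (rule power2_le_imp_le) simp
  then show ?thesis by (simp add: Dset_def)
qed

lemma coordD_one_in_Iset: assumes "w \<in> Sset" shows "coordD w 1 \<in> Iset"
proof -
  have "Re w / 2 \<in> {-1..1}" using abs_Re_le_cmod[of w] assms by (simp add: Sset_def abs_le_iff)
  moreover have "coordD w 1 = of_real (Re w / 2)" by (rule complex_eqI) simp_all
  ultimately show ?thesis unfolding Iset_def by blast
qed

lemma Iset_eq_coordD_one: assumes "z \<in> Iset" obtains w where "w \<in> Sset" "z = coordD w 1"
proof -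
  obtain x where "x \<in> {-1..1}" and z: "z = of_real x" using assms by (auto simp: Iset_def)
  then have "x\<^sup>2 \<le> 1" by (simp add: abs_square_le_1 abs_le_iff)
  define w where "w = Complex (2 * x) (2 * sqrt (1 - x\<^sup>2))"
  have "(cmod w)\<^sup>2 = 2\<^sup>2" using \<open>x\<^sup>2 \<le> 1\<close> by (simp add: cmod_power2 w_def power_mult_distrib)
  then have "w \<in> Sset" unfolding Sset_def by (subst (asm) power2_eq_iff_nonneg) auto
  moreover have "z = coordD w 1" by (simp add: z w_def complex_eq_iff)
  ultimately show ?thesis using that by blast
qed

text \<open>The level set \<open>{ellipse_gauge s\<^sub>0 = 1}\<close> is the ellipse \<open>coordD ` (Sset \<times> {s\<^sub>0})\<close>
  with semi-axes \<open>2 - s\<^sub>0\<close> and \<open>2 (1 - s\<^sub>0)\<close>; the gauge is below 1 exactly inside it.\<close>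
definition ellipse_gauge :: "real \<Rightarrow> complex \<Rightarrow> real" where
  "ellipse_gauge s\<^sub>0 z = (Re z / (2 - s\<^sub>0))\<^sup>2 + (Im z / (2 * (1 - s\<^sub>0)))\<^sup>2"

lemma continuous_on_ellipse_gauge: "s\<^sub>0 < 1 \<Longrightarrow> continuous_on A (\<lambda>z. ellipse_gauge s\<^sub>0 z)"
  unfolding ellipse_gauge_def by (intro continuous_intros) auto

lemma ellipse_gauge_coordD:
  assumes "w \<in> Sset" "s\<^sub>0 < 1"
  shows "ellipse_gauge s\<^sub>0 (coordD w s) =
           ((2 - s) / (2 - s\<^sub>0))\<^sup>2 * ((Re w)\<^sup>2 / 4) + ((1 - s) / (1 - s\<^sub>0))\<^sup>2 * ((Im w)\<^sup>2 / 4)"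
    and "(Re w)\<^sup>2 / 4 + (Im w)\<^sup>2 / 4 = 1"
  using assms Sset_Re_Im[OF assms(1)] by (simp_all add: ellipse_gauge_def power2_eq_square field_simps)

lemma ellipse_gauge_coordD_eq: "w \<in> Sset \<Longrightarrow> s\<^sub>0 < 1 \<Longrightarrow> ellipse_gauge s\<^sub>0 (coordD w s\<^sub>0) = 1"
  using ellipse_gauge_coordD[of w s\<^sub>0] by simp

lemma convex_combination_gt_1:
  fixes a b x y :: real
  assumes "a + b = 1" "0 \<le> a" "0 \<le> b" "1 < x" "1 < y" shows "1 < x * a + y * b"
proof -
  have "min x y * a + min x y * b \<le> x * a + y * b" using assms by (intro add_mono mult_right_mono) auto
  then show ?thesis using assms by (simp add: distrib_left[symmetric])
qed

lemma convex_combination_lt_1: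
  fixes a b x y :: real
  assumes "a + b = 1" "0 \<le> a" "0 \<le> b" "x < 1" "y < 1" shows "x * a + y * b < 1"
  using convex_combination_gt_1[of a b "2 - x" "2 - y"] assms by (simp add: algebra_simps)

lemma ellipse_gauge_coordD_gt:
  assumes "w \<in> Sset" "0 \<le> s" "s < s\<^sub>0" "s\<^sub>0 < 1" shows "1 < ellipse_gauge s\<^sub>0 (coordD w s)"
proof -
  have "1 < (2 - s) / (2 - s\<^sub>0)" "1 < (1 - s) / (1 - s\<^sub>0)" using assms by auto
  then have "1 < ((2 - s) / (2 - s\<^sub>0))\<^sup>2" "1 < ((1 - s) / (1 - s\<^sub>0))\<^sup>2"
    by (simp_all add: one_less_power)
  moreover have "0 \<le> (Re w)\<^sup>2 / 4" "0 \<le> (Im w)\<^sup>2 / 4" by simp_all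
  ultimately show ?thesis
    unfolding ellipse_gauge_coordD[OF assms(1,4)]
    by (intro convex_combination_gt_1 ellipse_gauge_coordD(2)[OF assms(1,4)])
qed

lemma ellipse_gauge_coordD_lt:
  assumes "w \<in> Sset" "s \<le> 1" "s\<^sub>0 < s" "0 \<le> s\<^sub>0" shows "ellipse_gauge s\<^sub>0 (coordD w s) < 1"
proof -
  have "\<bar>(2 - s) / (2 - s\<^sub>0)\<bar> < 1" "\<bar>(1 - s) / (1 - s\<^sub>0)\<bar> < 1" using assms by auto
  then have "((2 - s) / (2 - s\<^sub>0))\<^sup>2 < 1" "((1 - s) / (1 - s\<^sub>0))\<^sup>2 < 1"
    by (simp_all add: abs_square_less_1)
  moreover have "0 \<le> (Re w)\<^sup>2 / 4" "0 \<le> (Im w)\<^sup>2 / 4" by simp_all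
  moreover have "s\<^sub>0 < 1" using assms by simp
  ultimately show ?thesis
    unfolding ellipse_gauge_coordD[OF assms(1) \<open>s\<^sub>0 < 1\<close>]
    by (intro convex_combination_lt_1 ellipse_gauge_coordD(2)[OF assms(1) \<open>s\<^sub>0 < 1\<close>])
qed

lemma coordD_inj:
  assumes "w \<in> Sset" "w' \<in> Sset" "0 \<le> s" "s < 1" "0 \<le> s'" "s' < 1"
    and eq: "coordD w s = coordD w' s'"
  shows "w = w'" "s = s'"
proof -
  show "s = s'"
  proof (rule ccontr)
    assume "s \<noteq> s'"
    then consider "s < s'" | "s' < s" by linarith
    then show False
    proof cases
      case 1
      then have "1 < ellipse_gauge s' (coordD w s)" using assms by (intro ellipse_gauge_coordD_gt)
      moreover have "ellipse_gauge s' (coordD w s) = 1" unfolding eq by (rule ellipse_gauge_coordD_eq[OF assms(2,6)])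
      ultimately show False by simp
    next
      case 2
      then have "1 < ellipse_gauge s (coordD w' s')" using assms by (intro ellipse_gauge_coordD_gt)
      moreover have "ellipse_gauge s (coordD w' s') = 1" unfolding eq[symmetric] by (rule ellipse_gauge_coordD_eq[OF assms(1,4)])
      ultimately show False by simp
    qed
  qed
  then have "Re w * (2 - s) / 2 = Re w' * (2 - s) / 2" "Im w * (1 - s) = Im w' * (1 - s)"
    using eq by (metis Re_coordD, metis Im_coordD)
  then show "w = w'" using assms by (auto intro: complex_eqI)
qed

lemma coordD_notin_Iset: assumes "w \<in> Sset" "0 \<le> s" "s < 1" shows "coordD w s \<notin> Iset"
proof
  assume "coordD w s \<in> Iset"
  then obtain w' where "w' \<in> Sset" and eq: "coordD w s = coordD w' 1" by (rule Iset_eq_coordD_one)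
  then have "Im w = 0" "Re w' = Re w * (2 - s)"
    using assms by (auto simp: complex_eq_iff)
  then have "\<bar>Re w\<bar> * (2 - s) = \<bar>Re w'\<bar>" using assms by (simp add: abs_mult)
  moreover have "\<bar>Re w'\<bar> \<le> 2" using \<open>w' \<in> Sset\<close> abs_Re_le_cmod[of w'] by (simp add: Sset_def)
  moreover have "(Re w)\<^sup>2 = 2\<^sup>2" using Sset_Re_Im[OF assms(1)] \<open>Im w = 0\<close> by simp
  then have "\<bar>Re w\<bar> = 2" unfolding power2_eq_iff by auto
  ultimately show False using assms by auto
qed

lemma ellipse_gauge_root:
  assumes "z \<in> Dset" "z \<notin> Iset" obtains s where "0 \<le> s" "s < 1" "ellipse_gauge s z = 1"
proof -
  have "cmod z \<le> 2" using assms by (simp add: Dset_def)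
  then have "(cmod z)\<^sup>2 \<le> 2\<^sup>2" by (intro power_mono) auto
  then have below: "ellipse_gauge 0 z \<le> 1"
    by (simp add: ellipse_gauge_def cmod_power2 power_divide)
  have "\<bar>Re z\<bar> \<le> 2" "\<bar>Im z\<bar> \<le> 2" using \<open>cmod z \<le> 2\<close> abs_Re_le_cmod abs_Im_le_cmod by (metis order_trans)+
  obtain s\<^sub>1 where s\<^sub>1: "0 \<le> s\<^sub>1" "s\<^sub>1 < 1" "1 \<le> ellipse_gauge s\<^sub>1 z"
  proof (cases "Im z = 0")
    case False
    then have "(Im z / (2 * (1 - (1 - \<bar>Im z\<bar> / 2))))\<^sup>2 = 1" by (simp add: power_divide)
    then show ?thesis using that[of "1 - \<bar>Im z\<bar> / 2"] False \<open>\<bar>Im z\<bar> \<le> 2\<close>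
      by (simp add: ellipse_gauge_def)
  next
    case True
    have "\<bar>Re z\<bar> > 1"
    proof (rule ccontr)
      assume "\<not> \<bar>Re z\<bar> > 1"
      then have "z = of_real (Re z)" "Re z \<in> {-1..1}" using True by (auto simp: complex_eq_iff)
      then show False using assms(2) by (auto simp: Iset_def)
    qed
    then have "(Re z / (2 - (2 - \<bar>Re z\<bar>)))\<^sup>2 = 1" by (simp add: power_divide)
    then show ?thesis using that[of "2 - \<bar>Re z\<bar>"] \<open>\<bar>Re z\<bar> > 1\<close> \<open>\<bar>Re z\<bar> \<le> 2\<close>
      by (simp add: ellipse_gauge_def)
  qed
  have "continuous_on {0..s\<^sub>1} (\<lambda>s. ellipse_gauge s z)"
    unfolding ellipse_gauge_def using s\<^sub>1 by (intro continuous_intros) auto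
  then obtain s where "0 \<le> s" "s \<le> s\<^sub>1" "ellipse_gauge s z = 1"
    using IVT'[of "\<lambda>s. ellipse_gauge s z" 0 1 s\<^sub>1] below s\<^sub>1 by blast
  then show ?thesis using that s\<^sub>1 by simp
qed

lemma ellipse_gauge_eq_1_imp_coordD:
  assumes "s < 1" "ellipse_gauge s z = 1"
  obtains w where "w \<in> Sset" "z = coordD w s"
proof -
  define w where "w = Complex (2 * Re z / (2 - s)) (Im z / (1 - s))"
  have "(2 - 2 * s)\<^sup>2 = 4 * (1 - s)\<^sup>2" by (simp add: power2_eq_square algebra_simps)
  then have "(cmod w)\<^sup>2 = 4 * ellipse_gauge s z"
    unfolding w_def cmod_power2 ellipse_gauge_def by (simp add: power_divide power_mult_distrib)
  then have "(cmod w)\<^sup>2 = 2\<^sup>2" using assms by simp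
  then have "cmod w = 2" by (subst (asm) power2_eq_iff_nonneg) auto
  moreover have "z = coordD w s" using assms by (simp add: w_def complex_eq_iff)
  ultimately show ?thesis using that by (simp add: Sset_def)
qed

lemma Dset_obtain_coordD:
  assumes "z \<in> Dset" obtains w s where "w \<in> Sset" "s \<in> {0..1}" "z = coordD w s"
proof (cases "z \<in> Iset")
  case True
  then show ?thesis using that by (meson Iset_eq_coordD_one atLeastAtMost_iff order_refl zero_le_one)
next
  case False
  obtain s where "0 \<le> s" "s < 1" "ellipse_gauge s z = 1" using ellipse_gauge_root[OF assms False] .
  then show ?thesis using that by (meson ellipse_gauge_eq_1_imp_coordD atLeastAtMost_iff less_imp_le)
qed

lemma Upsilon_coordinates:
  assumes "z \<in> Dset"
  obtains w s where "w \<in> Sset" "s \<in> {0..1}" "z = coordD w s" "Upsilon z = coordD w (min (2 * s) 1)"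
proof -
  define P where "P = (\<lambda>(w, s). w \<in> Sset \<and> s \<in> {0..(1::real)} \<and> z = coordD w s)"
  obtain w\<^sub>0 s\<^sub>0 where "w\<^sub>0 \<in> Sset" "s\<^sub>0 \<in> {0..1}" "z = coordD w\<^sub>0 s\<^sub>0"
    using Dset_obtain_coordD[OF assms] .
  then have "P (w\<^sub>0, s\<^sub>0)" by (simp add: P_def)
  then have "P (SOME p. P p)" by (rule someI)
  moreover obtain w s where ws: "(SOME p. P p) = (w, s)" by fastforce
  ultimately have "P (w, s)" by simp
  moreover have "Upsilon z = coordD w (min (2 * s) 1)" using ws unfolding Upsilon_def P_def by simp
  ultimately show ?thesis using that unfolding P_def by auto
qed

lemma Upsilon_in_Dset: assumes "z \<in> Dset" shows "Upsilon z \<in> Dset"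
proof -
  obtain w s where "w \<in> Sset" "s \<in> {0..1}" "Upsilon z = coordD w (min (2 * s) 1)"
    using Upsilon_coordinates[OF assms] by metis
  then show ?thesis by (simp add: coordD_in_Dset)
qed

lemma Upsilon_coordD:
  assumes "w \<in> Sset" "0 \<le> s" "s < 1"
  shows "Upsilon (coordD w s) = coordD w (min (2 * s) 1)"
proof -
  obtain w' s' where ws': "w' \<in> Sset" "s' \<in> {0..1}" "coordD w s = coordD w' s'"
    and U: "Upsilon (coordD w s) = coordD w' (min (2 * s') 1)"
    using Upsilon_coordinates coordD_in_Dset assms by (metis atLeastAtMost_iff less_imp_le)
  have "s' \<noteq> 1" using ws' coordD_one_in_Iset coordD_notin_Iset assms by metis
  then have "w = w'" "s = s'" using coordD_inj[OF assms(1) ws'(1) assms(2,3)] ws' by auto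
  then show ?thesis using U by simp
qed

lemma Upsilon_coordD_in_Iset:
  assumes "w \<in> Sset" "1/2 \<le> s" "s \<le> 1"
  shows "Upsilon (coordD w s) \<in> Iset"
proof -
  obtain w' s' where ws': "w' \<in> Sset" "s' \<in> {0..1}" "coordD w s = coordD w' s'"
    and U: "Upsilon (coordD w s) = coordD w' (min (2 * s') 1)"
    using Upsilon_coordinates coordD_in_Dset assms by (metis atLeastAtMost_iff dual_order.trans zero_le_divide_1_iff zero_le_numeral)
  have "1/2 \<le> s'"
  proof (rule ccontr)
    assume "\<not> 1/2 \<le> s'"
    then have "coordD w' s' \<notin> Iset" using ws' coordD_notin_Iset by auto
    then have "s \<noteq> 1" using ws'(3) coordD_one_in_Iset[OF assms(1)] by auto
    then have "s < 1" using assms by simp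
    then have "s = s'" using coordD_inj(2)[OF assms(1) ws'(1) _ \<open>s < 1\<close> _ _ ws'(3)] ws' assms \<open>\<not> 1/2 \<le> s'\<close> by auto
    then show False using assms \<open>\<not> 1/2 \<le> s'\<close> by simp
  qed
  then show ?thesis using U coordD_one_in_Iset[OF ws'(1)] by simp
qed

lemma fmap_maps_interval:
  assumes "t \<in> Jset" "x \<in> {-1..1}" shows "fmap t x \<in> {-1..1}"
proof -
  have t: "1 < t" "t \<le> 2" and x: "-1 \<le> x" "x \<le> 1" using assms by (auto simp: Jset_def)
  have "min (t * (x - 1) + 3) (t * (1 - x) - 1) \<le> 1"
  proof (cases "t * x \<le> t - 2")
    case True then show ?thesis by (simp add: algebra_simps)
  next
    case False then show ?thesis by (simp add: algebra_simps)
  qed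
  moreover have "t * (x - 1) \<ge> t * (-2)" using t x by (intro mult_left_mono) auto
  moreover have "t * (1 - x) \<ge> 0" using t x by simp
  ultimately show ?thesis using t by (auto simp: fmap_def)
qed

text \<open>If \<open>g p = q\<close>, pull a small ball around \<open>q\<close> back by an approximating homeomorphism:
  the preimage is connected and contains \<open>p\<close> and \<open>q\<close>, yet it would split into its part in
  \<open>V\<close> and its part near \<open>q\<close>, where \<open>g\<close> is the identity.\<close>
lemma near_homeomorphism_no_fold:
  fixes g :: "'a::real_normed_vector \<Rightarrow> 'a"
  assumes "convex D"
    and approx: "\<And>e. e > 0 \<Longrightarrow> \<exists>h h'. homeomorphism D D h h' \<and> (\<forall>z\<in>D. dist (g z) (h z) < e)"
    and "open U" "open V" "U \<inter> V = {}"
    and fixes_outside: "\<And>y. y \<in> D \<Longrightarrow> y \<notin> V \<Longrightarrow> g y = y"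
    and "p \<in> D" "p \<in> V" "q \<in> D" "q \<in> U"
  shows "g p \<noteq> q"
proof
  assume gp: "g p = q"
  obtain e where e: "e > 0" "ball q e \<subseteq> U" using \<open>open U\<close> \<open>q \<in> U\<close> open_contains_ball by blast
  obtain h h' where hh: "homeomorphism D D h h'" and close: "\<forall>z\<in>D. dist (g z) (h z) < e / 2"
    using approx[of "e / 2"] e by auto
  define K where "K = h' ` (ball q (e / 2) \<inter> D)"
  have "connected K" unfolding K_def
  proof (rule connected_continuous_image)
    show "continuous_on (ball q (e / 2) \<inter> D) h'"
      using hh by (auto simp: homeomorphism_def elim: continuous_on_subset)
    show "connected (ball q (e / 2) \<inter> D)" by (intro convex_connected convex_Int convex_ball \<open>convex D\<close>)
  qed
  have in_K: "y \<in> K" if "y \<in> D" "dist q (h y) < e / 2" for y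
    using that hh unfolding K_def homeomorphism_def by (metis IntI image_eqI mem_ball)
  have "g q = q" using fixes_outside \<open>q \<in> D\<close> \<open>q \<in> U\<close> \<open>U \<inter> V = {}\<close> by blast
  then have "p \<in> K" "q \<in> K" using close gp \<open>p \<in> D\<close> \<open>q \<in> D\<close> by (auto intro!: in_K)
  have "K \<subseteq> ball q e \<union> V"
  proof
    fix y assume "y \<in> K"
    then obtain x where x: "x \<in> ball q (e / 2)" "x \<in> D" "y = h' x" unfolding K_def by auto
    then have "y \<in> D" "h y = x" using hh unfolding homeomorphism_def by auto
    then have "dist x (g y) < e / 2" using close by (auto simp: dist_commute)
    then have "dist q (g y) < e" using x(1) dist_triangle[of q "g y" x] by (simp add: dist_commute)
    then show "y \<in> ball q e \<union> V" using fixes_outside[OF \<open>y \<in> D\<close>] by auto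
  qed
  moreover have "ball q e \<inter> V \<inter> K = {}" using e \<open>U \<inter> V = {}\<close> by auto
  ultimately show False
    using connectedD[OF \<open>connected K\<close> open_ball \<open>open V\<close>] \<open>p \<in> K\<close> \<open>q \<in> K\<close> \<open>p \<in> V\<close> e(1)
    by (metis Int_iff centre_in_ball empty_iff)
qed

text \<open>A point \<open>(y, s)\<close> of \<open>A\<close> with \<open>s \<ge> 1\<close> is recorded by the level \<open>k = \<lfloor>s\<rfloor>\<close> of the thread at
  which it leaves \<open>I\<close> and the height \<open>v = (s - k + 1) / 2 \<in> [1/2, 1)\<close> there; for \<open>s < 1\<close> the level
  is 0 and the height is \<open>s\<close> itself.\<close>
definition ray_height :: "real \<Rightarrow> real" where
  "ray_height s = (if s < 1 then s else (s - real (nat \<lfloor>s\<rfloor>) + 1) / 2)"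

definition ray_thread ::
    "(real \<Rightarrow> complex \<Rightarrow> complex) \<Rightarrow> real \<Rightarrow> complex \<Rightarrow> nat \<Rightarrow> real \<Rightarrow> nat \<Rightarrow> complex" where
  "ray_thread fbar t w k v =
     (\<lambda>n. if n < k then (Hmap fbar t ^^ (k - n)) (coordD w v) else coordD w (v / 2 ^ (n - k)))"

lemma nat_floor_eq_0_iff: "0 \<le> s \<Longrightarrow> nat \<lfloor>s\<rfloor> = 0 \<longleftrightarrow> s < 1"
  by (simp add: floor_less_iff)

lemma ray_height_bounds:
  assumes "0 \<le> s"
  shows "0 \<le> ray_height s" "ray_height s < 1" "0 < nat \<lfloor>s\<rfloor> \<Longrightarrow> 1/2 \<le> ray_height s"
  using assms by (auto simp: ray_height_def) linarith+

lemma ray_height_inj: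
  assumes "0 \<le> s" "0 \<le> s'" "nat \<lfloor>s\<rfloor> = nat \<lfloor>s'\<rfloor>" "ray_height s = ray_height s'"
  shows "s = s'"
  using assms nat_floor_eq_0_iff[OF assms(1)] nat_floor_eq_0_iff[OF assms(2)]
  by (auto simp: ray_height_def split: if_splits)

lemma ray_height_surj:
  assumes "0 \<le> v" "v < 1" "0 < k \<Longrightarrow> 1/2 \<le> v"
  obtains s where "0 \<le> s" "nat \<lfloor>s\<rfloor> = k" "ray_height s = v"
proof (cases "k = 0")
  case True
  then show ?thesis using that[of v] assms by (simp add: ray_height_def floor_eq_iff)
next
  case False
  define s where "s = real k + 2 * v - 1"
  have "\<lfloor>s\<rfloor> = int k" using False assms by (simp add: s_def floor_eq_iff)
  then show ?thesis using that[of s] False assms by (simp add: s_def ray_height_def)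
qed

lemma Psi_eq_ray_thread:
  assumes "0 \<le> s"
  shows "Psi fbar t (w, s) = ray_thread fbar t w (nat \<lfloor>s\<rfloor>) (ray_height s)"
  using assms nat_floor_eq_0_iff[OF assms]
  by (auto simp: Psi_def ray_thread_def ray_height_def Let_def)

lemma thread_iterate: "z \<in> Dhat fbar t \<Longrightarrow> (Hmap fbar t ^^ j) (z (n + j)) = z n"
proof (induction j)
  case (Suc j)
  then have "Hmap fbar t (z (Suc (n + j))) = z (n + j)" by (simp add: Dhat_def)
  then show ?case using Suc by (simp add: funpow_Suc_right del: funpow.simps)
qed simp

context
  fixes fbar :: "real \<Rightarrow> complex \<Rightarrow> complex" and t :: real
  assumes unwrapping: "unwrapping fbar" and t_in_J: "t \<in> Jset"
begin

lemma fbar_near_homeo: "op_near_homeo (fbar t)"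
  using unwrapping t_in_J by (simp add: unwrapping_def)

lemma fbar_in_Dset: "z \<in> Dset \<Longrightarrow> fbar t z \<in> Dset"
  using fbar_near_homeo by (auto simp: op_near_homeo_def)

lemma fbar_fixes_collar: "w \<in> Sset \<Longrightarrow> s \<in> {0..3/4} \<Longrightarrow> fbar t (coordD w s) = coordD w s"
  using unwrapping t_in_J by (simp add: unwrapping_def)

lemma Hmap_in_Dset: "z \<in> Dset \<Longrightarrow> Hmap fbar t z \<in> Dset"
  by (simp add: Hmap_def fbar_in_Dset Upsilon_in_Dset)

lemma funpow_Hmap_in_Dset: "z \<in> Dset \<Longrightarrow> (Hmap fbar t ^^ m) z \<in> Dset"
  by (induction m) (auto intro: Hmap_in_Dset)

lemma Hmap_coordD_collar:
  assumes "w \<in> Sset" "0 \<le> s" "s \<le> 3/4"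
  shows "Hmap fbar t (coordD w s) = coordD w (min (2 * s) 1)"
  using assms fbar_fixes_collar Upsilon_coordD by (simp add: Hmap_def)

lemma Hmap_of_real: "x \<in> {-1..1} \<Longrightarrow> Hmap fbar t (of_real x) = of_real (fmap t x)"
  using unwrapping t_in_J by (simp add: unwrapping_def Hmap_def)

lemma Hmap_Iset: assumes "z \<in> Iset" shows "Hmap fbar t z \<in> Iset"
proof -
  obtain x where "x \<in> {-1..1}" "z = of_real x" using assms by (auto simp: Iset_def)
  then show ?thesis using Hmap_of_real fmap_maps_interval[OF t_in_J] by (auto simp: Iset_def)
qed

lemma funpow_Hmap_Iset: "z \<in> Iset \<Longrightarrow> (Hmap fbar t ^^ m) z \<in> Iset"
  by (induction m) (auto intro: Hmap_Iset)

lemma fbar_no_fold: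
  assumes "w \<in> Sset" "3/4 < \<sigma>" "\<sigma> \<le> 1" "w' \<in> Sset" "0 \<le> s'" "s' < 3/4"
  shows "fbar t (coordD w \<sigma>) \<noteq> coordD w' s'"
proof -
  define F where "F = ellipse_gauge (3/4)"
  have approx: "\<exists>h h'. homeomorphism Dset Dset h h' \<and> (\<forall>z\<in>Dset. dist (fbar t z) (h z) < e)"
    if "e > 0" for e
    using fbar_near_homeo that by (fastforce simp: op_near_homeo_def orient_pres_homeo_def)
  have "continuous_on UNIV F" unfolding F_def by (rule continuous_on_ellipse_gauge) simp
  then have "open {z. 1 < F z}" "open {z. F z < 1}"
    by (auto intro: open_Collect_less continuous_on_const)
  moreover have "{z. 1 < F z} \<inter> {z. F z < 1} = {}" by auto
  moreover have "fbar t y = y" if "y \<in> Dset" "y \<notin> {z. F z < 1}" for y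
  proof -
    obtain w\<^sub>1 s\<^sub>1 where ws: "w\<^sub>1 \<in> Sset" "s\<^sub>1 \<in> {0..1}" "y = coordD w\<^sub>1 s\<^sub>1"
      using Dset_obtain_coordD[OF \<open>y \<in> Dset\<close>] .
    have "s\<^sub>1 \<le> 3/4"
    proof (rule ccontr)
      assume "\<not> s\<^sub>1 \<le> 3/4"
      then have "F y < 1" using ws ellipse_gauge_coordD_lt[of w\<^sub>1 s\<^sub>1 "3/4"] by (simp add: F_def)
      then show False using that(2) by simp
    qed
    then show ?thesis using ws fbar_fixes_collar by simp
  qed
  moreover have "coordD w \<sigma> \<in> Dset" "coordD w' s' \<in> Dset" using assms by (simp_all add: coordD_in_Dset)
  moreover have "coordD w \<sigma> \<in> {z. F z < 1}" using assms by (simp add: F_def ellipse_gauge_coordD_lt)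
  moreover have "coordD w' s' \<in> {z. 1 < F z}" using assms by (simp add: F_def ellipse_gauge_coordD_gt)
  moreover have "convex Dset" by (simp add: Dset_def)
  ultimately show ?thesis
    by (intro near_homeomorphism_no_fold[OF _ approx, where U = "{z. 1 < F z}" and V = "{z. F z < 1}"]) auto
qed

lemma Hmap_coordD_in_Iset:
  assumes "w \<in> Sset" "1/2 \<le> \<sigma>" "\<sigma> \<le> 1"
  shows "Hmap fbar t (coordD w \<sigma>) \<in> Iset"
proof (cases "\<sigma> \<le> 3/4")
  case True
  then show ?thesis using Hmap_coordD_collar assms coordD_one_in_Iset by simp
next
  case False
  have "fbar t (coordD w \<sigma>) \<in> Dset" using assms by (simp add: fbar_in_Dset coordD_in_Dset)
  then obtain w\<^sub>1 s\<^sub>1 where ws: "w\<^sub>1 \<in> Sset" "s\<^sub>1 \<in> {0..1}" "fbar t (coordD w \<sigma>) = coordD w\<^sub>1 s\<^sub>1"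
    by (rule Dset_obtain_coordD)
  have "3/4 \<le> s\<^sub>1" using fbar_no_fold[OF assms(1) _ assms(3) ws(1)] False ws by force
  then show ?thesis using Upsilon_coordD_in_Iset[OF ws(1)] ws by (simp add: Hmap_def)
qed

lemma Hmap_preimage_outside_Iset:
  assumes "z \<in> Dset" "w \<in> Sset" "0 \<le> r" "r < 1" "Hmap fbar t z = coordD w r"
  shows "z = coordD w (r / 2)"
proof -
  obtain w\<^sub>1 s\<^sub>1 where ws: "w\<^sub>1 \<in> Sset" "s\<^sub>1 \<in> {0..1}" "z = coordD w\<^sub>1 s\<^sub>1"
    using Dset_obtain_coordD[OF assms(1)] .
  have "coordD w r \<notin> Iset" using assms coordD_notin_Iset by blast
  then have "s\<^sub>1 < 1/2" using Hmap_coordD_in_Iset[OF ws(1)] ws assms(5) by force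
  then have eq: "coordD w\<^sub>1 (2 * s\<^sub>1) = coordD w r" using Hmap_coordD_collar[OF ws(1)] ws assms(5) by simp
  have "0 \<le> 2 * s\<^sub>1" "2 * s\<^sub>1 < 1" using ws \<open>s\<^sub>1 < 1/2\<close> by auto
  from coordD_inj[OF ws(1) assms(2) this assms(3,4) eq] have "w\<^sub>1 = w" "s\<^sub>1 = r / 2" by linarith+
  then show ?thesis unfolding ws(3) by (simp only:)
qed

lemma thread_tail:
  assumes "z \<in> Dhat fbar t" "w \<in> Sset" "0 \<le> r" "r < 1" "z N = coordD w r"
  shows "z (N + j) = coordD w (r / 2 ^ j)"
proof (induction j)
  case (Suc j)
  have "r / 2 ^ j \<le> r" using assms by (simp add: divide_le_eq one_le_power mult_le_cancel_left1)
  have "r < 2 ^ j" using assms(4) one_le_power[of "2::real" j] by linarith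
  then have "Hmap fbar t (z (N + Suc j)) = coordD w (r / 2 ^ j)" "z (N + Suc j) \<in> Dset"
    using assms Suc by (auto simp: Dhat_def)
  then show ?case
    using Hmap_preimage_outside_Iset[of _ w "r / 2 ^ j"] assms \<open>r / 2 ^ j \<le> r\<close> \<open>r < 2 ^ j\<close>
    by (simp add: mult.commute)
qed (use assms in simp)

lemma Dhat_Iset_imp_Ihat:
  assumes "z \<in> Dhat fbar t" "\<And>n. z n \<in> Iset" shows "z \<in> Ihat t"
proof -
  have "of_real (fmap t (Re (z (Suc n)))) = z n" for n
  proof -
    obtain x where "x \<in> {-1..1}" "z (Suc n) = of_real x" using assms(2)[of "Suc n"] by (auto simp: Iset_def)
    moreover have "Hmap fbar t (z (Suc n)) = z n" using assms(1) by (simp add: Dhat_def)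
    ultimately show ?thesis using Hmap_of_real by simp
  qed
  then show ?thesis using assms(2) by (simp add: Ihat_def)
qed

lemma ray_thread_in_Dhat:
  assumes "w \<in> Sset" "0 \<le> v" "v < 1"
  shows "ray_thread fbar t w k v \<in> Dhat fbar t"
proof -
  have small: "0 \<le> v / 2 ^ m" "v / 2 ^ m < 1" for m :: nat
    using assms by (simp_all add: divide_less_eq less_le_trans[OF _ one_le_power])
  have "ray_thread fbar t w k v n \<in> Dset" for n
    unfolding ray_thread_def using small[of "n - k"] assms
    by (auto intro!: coordD_in_Dset funpow_Hmap_in_Dset)
  moreover have "Hmap fbar t (ray_thread fbar t w k v (Suc n)) = ray_thread fbar t w k v n" for n
  proof -
    consider "Suc n < k" | "Suc n = k" | "k \<le> n" by linarith
    then show ?thesis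
    proof cases
      case 1
      then have "k - n = Suc (k - Suc n)" by simp
      then show ?thesis using 1 by (simp add: ray_thread_def)
    next
      case 2
      then have "k - n = 1" by simp
      then show ?thesis using 2 by (simp add: ray_thread_def)
    next
      case 3
      define r where "r = v / 2 ^ (n - k)"
      have "ray_thread fbar t w k v (Suc n) = coordD w (r / 2)" "ray_thread fbar t w k v n = coordD w r"
        using 3 by (simp_all add: ray_thread_def r_def Suc_diff_le mult.commute)
      moreover have "0 \<le> r" "r < 1" using small[of "n - k"] by (simp_all add: r_def)
      then have "Hmap fbar t (coordD w (r / 2)) = coordD w r"
        using Hmap_coordD_collar[OF assms(1), of "r / 2"] by simp
      ultimately show ?thesis by simp
    qed
  qed
  ultimately show ?thesis by (simp add: Dhat_def)
qed

lemma ray_thread_in_Iset_iff: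
  assumes "w \<in> Sset" "0 \<le> v" "v < 1" "0 < k \<Longrightarrow> 1/2 \<le> v"
  shows "ray_thread fbar t w k v n \<in> Iset \<longleftrightarrow> n < k"
proof (cases "n < k")
  case True
  then obtain m where "k - n = Suc m" by (cases "k - n") auto
  moreover have "Hmap fbar t (coordD w v) \<in> Iset"
    using Hmap_coordD_in_Iset[OF assms(1)] assms True by simp
  ultimately show ?thesis
    using True funpow_Hmap_Iset by (simp add: ray_thread_def funpow_Suc_right del: funpow.simps)
next
  case False
  have "v / 2 ^ (n - k) < 1" using assms by (simp add: divide_less_eq less_le_trans[OF _ one_le_power])
  then show ?thesis using False coordD_notin_Iset assms by (simp add: ray_thread_def)
qed

lemma ray_thread_inj:
  assumes "w \<in> Sset" "0 \<le> v" "v < 1" "0 < k \<Longrightarrow> 1/2 \<le> v"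
    and "w' \<in> Sset" "0 \<le> v'" "v' < 1" "0 < k' \<Longrightarrow> 1/2 \<le> v'"
    and eq: "ray_thread fbar t w k v = ray_thread fbar t w' k' v'"
  shows "w = w'" "k = k'" "v = v'"
proof -
  have "n < k \<longleftrightarrow> n < k'" for n
    using ray_thread_in_Iset_iff[OF assms(1-4)] ray_thread_in_Iset_iff[OF assms(5-8)] eq by metis
  then show "k = k'" by (meson linorder_neqE_nat less_irrefl)
  then have "coordD w v = coordD w' v'" using fun_cong[OF eq, of k] by (simp add: ray_thread_def)
  then show "w = w'" "v = v'" using coordD_inj assms by blast+
qed

lemma Dhat_minus_Ihat_obtain_ray_thread:
  assumes z: "z \<in> Dhat fbar t - Ihat t"
  obtains w k v where "w \<in> Sset" "0 \<le> v" "v < 1" "0 < k \<longrightarrow> 1/2 \<le> v"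
    "z = ray_thread fbar t w k v"
proof -
  have zD: "z n \<in> Dset" and zH: "Hmap fbar t (z (Suc n)) = z n" for n
    using z by (auto simp: Dhat_def)
  have "\<exists>n. z n \<notin> Iset" using z Dhat_Iset_imp_Ihat by blast
  define k where "k = (LEAST n. z n \<notin> Iset)"
  have "z k \<notin> Iset" unfolding k_def using \<open>\<exists>n. z n \<notin> Iset\<close> by (rule LeastI_ex)
  have below: "z n \<in> Iset" if "n < k" for n using that not_less_Least unfolding k_def by blast
  obtain w v where wv: "w \<in> Sset" "v \<in> {0..1}" "z k = coordD w v" using Dset_obtain_coordD[OF zD] .
  have "v \<noteq> 1" using wv \<open>z k \<notin> Iset\<close> coordD_one_in_Iset by auto
  then have "0 \<le> v" "v < 1" using wv by simp_all
  have tail: "z (k + j) = coordD w (v / 2 ^ j)" for j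
    using thread_tail[OF DiffD1[OF z] wv(1) \<open>0 \<le> v\<close> \<open>v < 1\<close> wv(3)] .
  have half: "1/2 \<le> v" if "0 < k"
  proof (rule ccontr)
    assume "\<not> 1/2 \<le> v"
    then have "z (k - 1) = coordD w (2 * v)"
      using zH[of "k - 1"] that wv Hmap_coordD_collar by simp
    then show False using below[of "k - 1"] that coordD_notin_Iset wv \<open>\<not> 1/2 \<le> v\<close> by simp
  qed
  have "z = ray_thread fbar t w k v"
  proof
    fix n
    show "z n = ray_thread fbar t w k v n"
    proof (cases "n < k")
      case True
      then show ?thesis
        using thread_iterate[OF DiffD1[OF z], where j = "k - n" and n = n] wv by (simp add: ray_thread_def)
    next
      case False
      then show ?thesis using tail[of "n - k"] by (simp add: ray_thread_def)
    qed
  qed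
  then show ?thesis using that wv(1) \<open>0 \<le> v\<close> \<open>v < 1\<close> half by blast
qed

lemma Psi_inj_on: "inj_on (Psi fbar t) Aset"
proof (rule inj_onI)
  fix p p' assume "p \<in> Aset" "p' \<in> Aset" and eq: "Psi fbar t p = Psi fbar t p'"
  then obtain w s w' s' where p: "p = (w, s)" "w \<in> Sset" "0 \<le> s"
    and p': "p' = (w', s')" "w' \<in> Sset" "0 \<le> s'"
    by (auto simp: Aset_def)
  have "ray_thread fbar t w (nat \<lfloor>s\<rfloor>) (ray_height s) = ray_thread fbar t w' (nat \<lfloor>s'\<rfloor>) (ray_height s')"
    using eq p p' by (simp add: Psi_eq_ray_thread)
  from ray_thread_inj[OF p(2) ray_height_bounds[OF p(3)]
      p'(2) ray_height_bounds[OF p'(3)] this]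
  show "p = p'" using p p' ray_height_inj by auto
qed

lemma Psi_image: "Psi fbar t ` Aset = Dhat fbar t - Ihat t"
proof
  show "Psi fbar t ` Aset \<subseteq> Dhat fbar t - Ihat t"
  proof clarify
    fix w s assume "(w, s) \<in> Aset"
    then have ws: "w \<in> Sset" "0 \<le> s" by (auto simp: Aset_def)
    note bounds = ray_height_bounds[OF ws(2)]
    have "ray_thread fbar t w (nat \<lfloor>s\<rfloor>) (ray_height s) n \<in> Iset \<longleftrightarrow> n < nat \<lfloor>s\<rfloor>" for n
      by (rule ray_thread_in_Iset_iff[OF ws(1) bounds(1,2)]) (fact bounds(3))
    then have "ray_thread fbar t w (nat \<lfloor>s\<rfloor>) (ray_height s) (nat \<lfloor>s\<rfloor>) \<notin> Iset" by blast
    then have "Psi fbar t (w, s) (nat \<lfloor>s\<rfloor>) \<notin> Iset" using ws by (simp add: Psi_eq_ray_thread)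
    moreover have "Psi fbar t (w, s) \<in> Dhat fbar t"
      using ray_thread_in_Dhat[OF ws(1) bounds(1,2)] ws by (simp add: Psi_eq_ray_thread)
    ultimately show "Psi fbar t (w, s) \<in> Dhat fbar t - Ihat t" by (auto simp: Ihat_def)
  qed
  show "Dhat fbar t - Ihat t \<subseteq> Psi fbar t ` Aset"
  proof
    fix z assume "z \<in> Dhat fbar t - Ihat t"
    then obtain w k v where wkv: "w \<in> Sset" "0 \<le> v" "v < 1" "0 < k \<longrightarrow> 1/2 \<le> v"
      and z: "z = ray_thread fbar t w k v"
      using Dhat_minus_Ihat_obtain_ray_thread by blast
    obtain s where "0 \<le> s" "nat \<lfloor>s\<rfloor> = k" "ray_height s = v"
      using ray_height_surj wkv(2,3) wkv(4)[rule_format] .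
    then have "z = Psi fbar t (w, s)" "(w, s) \<in> Aset" using z wkv by (simp_all add: Psi_eq_ray_thread Aset_def)
    then show "z \<in> Psi fbar t ` Aset" by blast
  qed
qed

end

theorem mainTheorem6:
  fixes fbar :: "real \<Rightarrow> complex \<Rightarrow> complex" and t :: real
  assumes "unwrapping fbar" and "t \<in> Jset"
  shows "bij_betw (Psi fbar t) Aset (Dhat fbar t - Ihat t)"
  using Psi_inj_on[OF assms] Psi_image[OF assms] by (simp add: bij_betw_def)

end
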